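(* Let $G$ be a connected graph of order $n\geq 3$ with $|E(G)|\geq\binom{n-2}{2}+2$. Then $prc(G)=\chi'(G)$, or $G$ is isomorphic to one of $P_4$, $Z_2$, $G_{6.3}$.
   Context: A path in an edge-coloured graph is a rainbow path if its edges receive pairwise distinct colours. The proper rainbow connection number $prc(G)$ of a connected graph is the minimum number of colours in a proper edge-colouring (adjacent edges get distinct colours) such that every two distinct vertices are joined by a rainbow path; $\chi'(G)$ is the chromatic index. $P_4$ is the path on 4 vertices. $Z_2$ is the graph on vertices $a,b,c,d,e$ with edges $ab,bc,ca,ad,de$ (a triangle with a pendant path of length 2 attached at one triangle vertex). $G_{6.3}$ is the graph on vertices $w,w_1,w_2,w_3,u_1,u_2$ with the 8 edges $ww_1, ww_2, ww_3, w_2w_3, w_2u_2, u_1u_2, w_1u_1, w_1u_2$. *)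

theory Defs
  imports Main
begin

definition simple_graph :: "'a set \<Rightarrow> 'a set set \<Rightarrow> bool" where
  "simple_graph V E \<longleftrightarrow> finite V \<and> (\<forall>e\<in>E. \<exists>x y. x \<in> V \<and> y \<in> V \<and> x \<noteq> y \<and> e = {x, y})"

definition is_path :: "'a set \<Rightarrow> 'a set set \<Rightarrow> 'a list \<Rightarrow> bool" where
  "is_path V E xs \<longleftrightarrow> xs \<noteq> [] \<and> distinct xs \<and> set xs \<subseteq> V \<and>
     (\<forall>i. Suc i < length xs \<longrightarrow> {xs ! i, xs ! Suc i} \<in> E)"

definition path_edges :: "'a list \<Rightarrow> 'a set list" where
  "path_edges xs = map (\<lambda>(a, b). {a, b}) (zip xs (tl xs))"

definition connected_graph :: "'a set \<Rightarrow> 'a set set \<Rightarrow> bool" where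
  "connected_graph V E \<longleftrightarrow> simple_graph V E \<and> V \<noteq> {} \<and>
     (\<forall>u\<in>V. \<forall>v\<in>V. \<exists>xs. is_path V E xs \<and> hd xs = u \<and> last xs = v)"

definition proper_edge_colouring :: "'a set set \<Rightarrow> ('a set \<Rightarrow> nat) \<Rightarrow> bool" where
  "proper_edge_colouring E c \<longleftrightarrow>
     (\<forall>e\<in>E. \<forall>f\<in>E. e \<noteq> f \<and> e \<inter> f \<noteq> {} \<longrightarrow> c e \<noteq> c f)"

definition rainbow_path :: "'a set \<Rightarrow> 'a set set \<Rightarrow> ('a set \<Rightarrow> nat) \<Rightarrow> 'a list \<Rightarrow> bool" where
  "rainbow_path V E c xs \<longleftrightarrow> is_path V E xs \<and> distinct (map c (path_edges xs))"

definition rainbow_connected :: "'a set \<Rightarrow> 'a set set \<Rightarrow> ('a set \<Rightarrow> nat) \<Rightarrow> bool" where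
  "rainbow_connected V E c \<longleftrightarrow>
     (\<forall>u\<in>V. \<forall>v\<in>V. u \<noteq> v \<longrightarrow> (\<exists>xs. rainbow_path V E c xs \<and> hd xs = u \<and> last xs = v))"

definition chromatic_index :: "'a set set \<Rightarrow> nat" where
  "chromatic_index E = (LEAST k. \<exists>c. proper_edge_colouring E c \<and> c ` E \<subseteq> {..<k})"

definition prc :: "'a set \<Rightarrow> 'a set set \<Rightarrow> nat" where
  "prc V E = (LEAST k. \<exists>c. proper_edge_colouring E c \<and> c ` E \<subseteq> {..<k} \<and> rainbow_connected V E c)"

definition graph_iso :: "'a set \<Rightarrow> 'a set set \<Rightarrow> 'b set \<Rightarrow> 'b set set \<Rightarrow> bool" where
  "graph_iso V E V' E' \<longleftrightarrow> (\<exists>f. bij_betw f V V' \<and> (\<forall>x\<in>V. \<forall>y\<in>V. {x, y} \<in> E \<longleftrightarrow> {f x, f y} \<in> E'))"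

definition P4_V :: "nat set" where "P4_V = {0, 1, 2, 3}"
definition P4_E :: "nat set set" where "P4_E = {{0, 1}, {1, 2}, {2, 3}}"

definition Z2_V :: "nat set" where "Z2_V = {0, 1, 2, 3, 4}"
definition Z2_E :: "nat set set" where "Z2_E = {{0, 1}, {1, 2}, {2, 0}, {0, 3}, {3, 4}}"

text \<open>G_6.3: w,w1,w2,w3,u1,u2 = 0,1,2,3,4,5;
  edges w w1, w w2, w w3, w2 w3, w2 u2, u1 u2, w1 u1, w1 u2.\<close>
definition G63_V :: "nat set" where "G63_V = {0, 1, 2, 3, 4, 5}"
definition G63_E :: "nat set set" where
  "G63_E = {{0, 1}, {0, 2}, {0, 3}, {2, 3}, {2, 5}, {4, 5}, {1, 4}, {1, 5}}"

end

theory Submission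
  imports Defs "HOL-Number_Theory.Cong"
begin

text \<open>Take a proper edge colouring c with \<chi>'(G) colours. If it is rainbow connected we are done,
  because prc(G) \<ge> \<chi>'(G) always. Otherwise some u, v are joined by no rainbow path. Paths with at
  most two edges are rainbow in a proper colouring, so u, v are non-adjacent with disjoint
  neighbourhoods A and B, and the edges between A and B form a matching. Comparing with the edge
  bound, almost all pairs inside V - {u, v} are edges and |A| = 1, |B| = 1 or |A| = |B| = 2.
  Non-rainbow paths of length four then bound the number of remaining vertices. What is left is
  P4, Z2, G_{6.3}, a clique with two pendant vertices, or one of three small graphs; the last two
  kinds carry an explicit proper rainbow colouring with at most \<Delta>(G) \<le> \<chi>'(G) colours.\<close>

lemma is_path_Cons_Cons:
  "is_path V E (x # y # xs) \<longleftrightarrow>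
     x \<notin> set (y # xs) \<and> x \<in> V \<and> {x, y} \<in> E \<and> is_path V E (y # xs)"
  unfolding is_path_def by (auto simp: nth_Cons split: nat.splits)

lemma is_path_singleton: "is_path V E [x] \<longleftrightarrow> x \<in> V"
  unfolding is_path_def by auto

lemma path_edges_Nil [simp]: "path_edges [] = []"
  and path_edges_singleton [simp]: "path_edges [x] = []"
  and path_edges_Cons_Cons [simp]: "path_edges (x # y # xs) = {x, y} # path_edges (y # xs)"
  unfolding path_edges_def by simp_all

lemmas rainbow_path_simps = rainbow_path_def is_path_Cons_Cons is_path_singleton

lemma is_path_iff_path_edges:
  "is_path V E xs \<longleftrightarrow> xs \<noteq> [] \<and> distinct xs \<and> set xs \<subseteq> V \<and> set (path_edges xs) \<subseteq> E"
  by (induction xs rule: induct_list012) (auto simp: is_path_Cons_Cons is_path_singleton,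
      simp add: is_path_def)

lemma path_edges_snoc: "xs \<noteq> [] \<Longrightarrow> path_edges (xs @ [y]) = path_edges xs @ [{last xs, y}]"
  by (induction xs rule: induct_list012) auto

lemma path_edges_rev: "path_edges (rev xs) = rev (path_edges xs)"
proof (induction xs rule: induct_list012)
  case (3 x y zs)
  have "path_edges (rev (x # y # zs)) = path_edges (rev (y # zs)) @ [{y, x}]"
    using path_edges_snoc[of "rev (y # zs)" x] by simp
  with 3 show ?case by (simp add: insert_commute)
qed auto

lemma path_edges_map: "path_edges (map g xs) = map (\<lambda>e. g ` e) (path_edges xs)"
  by (induction xs rule: induct_list012) auto

lemma rainbow_path_rev: "rainbow_path V E c xs \<Longrightarrow> rainbow_path V E c (rev xs)"
  unfolding rainbow_path_def is_path_iff_path_edges by (simp add: path_edges_rev rev_map[symmetric])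

lemma rainbow_connectedI_sym:
  assumes "\<And>p q. p \<in> V \<Longrightarrow> q \<in> V \<Longrightarrow> p \<noteq> q \<Longrightarrow>
     (\<exists>xs. rainbow_path V E c xs \<and> hd xs = p \<and> last xs = q) \<or>
     (\<exists>xs. rainbow_path V E c xs \<and> hd xs = q \<and> last xs = p)"
  shows "rainbow_connected V E c"
  unfolding rainbow_connected_def
proof (intro ballI impI)
  fix p q assume "p \<in> V" "q \<in> V" "p \<noteq> q"
  then consider xs where "rainbow_path V E c xs" "hd xs = p" "last xs = q"
    | xs where "rainbow_path V E c xs" "hd xs = q" "last xs = p"
    using assms by blast
  then show "\<exists>xs. rainbow_path V E c xs \<and> hd xs = p \<and> last xs = q"
  proof cases
    case (2 xs)
    then have "xs \<noteq> []" by (simp add: rainbow_path_def is_path_def)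
    with 2 show ?thesis by (intro exI[of _ "rev xs"]) (simp add: rainbow_path_rev hd_rev last_rev)
  qed blast
qed

lemma proper_edge_colouringD:
  "proper_edge_colouring E c \<Longrightarrow> e \<in> E \<Longrightarrow> f \<in> E \<Longrightarrow> e \<noteq> f \<Longrightarrow> e \<inter> f \<noteq> {} \<Longrightarrow>
    c e \<noteq> c f"
  unfolding proper_edge_colouring_def by blast

definition neighbours :: "'a set \<Rightarrow> 'a set set \<Rightarrow> 'a \<Rightarrow> 'a set" where
  "neighbours V E w = {z \<in> V. {w, z} \<in> E}"

definition proper_rainbow_colouring :: "'a set \<Rightarrow> 'a set set \<Rightarrow> ('a set \<Rightarrow> nat) \<Rightarrow> nat \<Rightarrow> bool" where
  "proper_rainbow_colouring V E c k \<longleftrightarrow>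
     proper_edge_colouring E c \<and> c ` E \<subseteq> {..<k} \<and> rainbow_connected V E c"

definition rainbow_colourable_by_degree :: "'a set \<Rightarrow> 'a set set \<Rightarrow> bool" where
  "rainbow_colourable_by_degree V E \<longleftrightarrow>
     (\<exists>c k z. z \<in> V \<and> k \<le> card (neighbours V E z) \<and> proper_rainbow_colouring V E c k)"

definition rainbow_separated :: "'a set \<Rightarrow> 'a set set \<Rightarrow> ('a set \<Rightarrow> nat) \<Rightarrow> 'a \<Rightarrow> 'a \<Rightarrow> bool" where
  "rainbow_separated V E c u v \<longleftrightarrow> u \<in> V \<and> v \<in> V \<and> u \<noteq> v \<and>
     \<not> (\<exists>xs. rainbow_path V E c xs \<and> hd xs = u \<and> last xs = v)"

lemma rainbow_connected_iff_not_separated: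
  "rainbow_connected V E c \<longleftrightarrow> \<not> (\<exists>u v. rainbow_separated V E c u v)"
  unfolding rainbow_connected_def rainbow_separated_def by blast

lemma chromatic_index_colouring:
  assumes "finite E"
  obtains c where "proper_edge_colouring E c" "c ` E \<subseteq> {..<chromatic_index E}"
proof -
  obtain h where h: "bij_betw h E {0..<card E}"
    using ex_bij_betw_finite_nat[OF assms] by blast
  then have "proper_edge_colouring E h"
    unfolding proper_edge_colouring_def bij_betw_def inj_on_def by blast
  moreover have "h ` E \<subseteq> {..<card E}"
    using h by (auto simp: bij_betw_def)
  ultimately have "\<exists>c. proper_edge_colouring E c \<and> c ` E \<subseteq> {..<card E}"
    by blast
  then have "\<exists>c. proper_edge_colouring E c \<and> c ` E \<subseteq> {..<chromatic_index E}"
    unfolding chromatic_index_def by (rule LeastI_ex[OF exI[of _ "card E"]])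
  with that show ?thesis by blast
qed

lemma card_neighbours_le_chromatic_index:
  assumes "finite E"
  shows "card (neighbours V E z) \<le> chromatic_index E"
proof -
  obtain c where c: "proper_edge_colouring E c" "c ` E \<subseteq> {..<chromatic_index E}"
    using chromatic_index_colouring[OF assms] .
  have "inj_on (\<lambda>w. c {z, w}) (neighbours V E z)"
  proof (rule inj_onI, rule ccontr)
    fix a b assume ab: "a \<in> neighbours V E z" "b \<in> neighbours V E z" "c {z, a} = c {z, b}" "a \<noteq> b"
    then have "{z, a} \<in> E" "{z, b} \<in> E" "{z, a} \<noteq> {z, b}" "{z, a} \<inter> {z, b} \<noteq> {}"
      by (auto simp: neighbours_def doubleton_eq_iff)
    with c(1) ab(3) show False by (blast dest: proper_edge_colouringD)
  qed
  moreover have "(\<lambda>w. c {z, w}) ` neighbours V E z \<subseteq> {..<chromatic_index E}"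
    using c(2) by (auto simp: neighbours_def)
  ultimately have "card (neighbours V E z) \<le> card {..<chromatic_index E}"
    by (rule card_inj_on_le[OF _ _ finite_lessThan])
  then show ?thesis by simp
qed

lemma prc_eq_chromatic_indexI:
  assumes "proper_rainbow_colouring V E c k" and "k \<le> chromatic_index E"
  shows "prc V E = chromatic_index E"
proof (rule antisym)
  have "prc V E \<le> k"
    unfolding prc_def using assms(1) by (intro Least_le) (auto simp: proper_rainbow_colouring_def)
  then show "prc V E \<le> chromatic_index E"
    using assms(2) by simp
  have "\<exists>c. proper_edge_colouring E c \<and> c ` E \<subseteq> {..<prc V E} \<and> rainbow_connected V E c"
    unfolding prc_def by (rule LeastI_ex) (use assms(1) in \<open>auto simp: proper_rainbow_colouring_def\<close>)
  then show "chromatic_index E \<le> prc V E"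
    unfolding chromatic_index_def by (auto intro: Least_le)
qed

lemma prc_eq_chromatic_index_if_rainbow_colourable_by_degree:
  assumes "finite E" and "rainbow_colourable_by_degree V E"
  shows "prc V E = chromatic_index E"
proof -
  obtain c k z where "k \<le> card (neighbours V E z)" "proper_rainbow_colouring V E c k"
    using assms(2) unfolding rainbow_colourable_by_degree_def by blast
  then show ?thesis
    using card_neighbours_le_chromatic_index[OF assms(1), of V z] prc_eq_chromatic_indexI by fastforce
qed

lemma rainbow_separated_sym:
  "rainbow_separated V E c u v \<Longrightarrow> rainbow_separated V E c v u"
  unfolding rainbow_separated_def
proof (elim conjE, intro conjI notI)
  assume no_path: "\<not> (\<exists>xs. rainbow_path V E c xs \<and> hd xs = u \<and> last xs = v)"
  assume "\<exists>xs. rainbow_path V E c xs \<and> hd xs = v \<and> last xs = u"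
  then obtain xs where xs: "rainbow_path V E c xs" "hd xs = v" "last xs = u" by blast
  then have "xs \<noteq> []" by (simp add: rainbow_path_def is_path_def)
  with xs have "hd (rev xs) = u" "last (rev xs) = v"
    by (simp_all add: hd_rev last_rev)
  with no_path rainbow_path_rev[OF xs(1)] show False by blast
qed auto

lemma path_edge_doubleton:
  "e \<in> set (path_edges xs) \<Longrightarrow> \<exists>a\<in>set xs. \<exists>b\<in>set xs. e = {a, b}"
proof (induction xs rule: induct_list012)
  case (3 x y zs)
  then consider "e = {x, y}" | "e \<in> set (path_edges (y # zs))" by auto
  then show ?case
  proof cases
    case 2 then show ?thesis using 3(2) by (meson list.set_intros(2))
  qed auto
qed auto

lemma rainbow_path_iso_transfer:
  assumes bij: "bij_betw f V V'"
    and edges: "\<forall>p\<in>V. \<forall>q\<in>V. {p, q} \<in> E \<longleftrightarrow> {f p, f q} \<in> E'"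
    and path: "rainbow_path V' E' c xs"
  shows "rainbow_path V E (\<lambda>e. c (f ` e)) (map (inv_into V f) xs)"
proof -
  let ?g = "inv_into V f"
  have xs: "xs \<noteq> []" "distinct xs" "set xs \<subseteq> V'" "set (path_edges xs) \<subseteq> E'"
    "distinct (map c (path_edges xs))"
    using path by (auto simp: rainbow_path_def is_path_iff_path_edges)
  have g_inj: "inj_on ?g V'"
    using bij by (metis bij_betw_def bij_betw_inv_into)
  have g_V: "?g a \<in> V" and f_g: "f (?g a) = a" if "a \<in> V'" for a
    using that bij by (auto simp: bij_betw_def inv_into_into f_inv_into_f)
  have g_edge: "?g ` e \<in> E" if e: "e \<in> set (path_edges xs)" for e
  proof -
    obtain a b where "a \<in> V'" "b \<in> V'" "e = {a, b}"
      using path_edge_doubleton[OF e] xs(3) by blast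
    then show ?thesis
      using edges g_V f_g xs(4) e by auto
  qed
  have f_g_edge: "f ` ?g ` e = e" if "e \<in> set (path_edges xs)" for e
    using path_edge_doubleton[OF that] xs(3) f_g by auto
  have colours: "map (\<lambda>e. c (f ` e)) (map ((`) ?g) (path_edges xs)) = map c (path_edges xs)"
    using f_g_edge by simp
  have "distinct (map (\<lambda>e. c (f ` e)) (map ((`) ?g) (path_edges xs)))"
    unfolding colours by (rule xs(5))
  moreover have "distinct (map ?g xs)"
    using xs(2,3) g_inj by (simp add: distinct_map inj_on_subset)
  ultimately show ?thesis
    unfolding rainbow_path_def is_path_iff_path_edges path_edges_map
    using xs g_V g_edge by auto
qed

lemma proper_rainbow_colouring_iso_transfer:
  assumes simple: "simple_graph V E" and bij: "bij_betw f V V'"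
    and edges: "\<forall>p\<in>V. \<forall>q\<in>V. {p, q} \<in> E \<longleftrightarrow> {f p, f q} \<in> E'"
    and colouring: "proper_rainbow_colouring V' E' c k"
  shows "proper_rainbow_colouring V E (\<lambda>e. c (f ` e)) k"
proof -
  have inj: "inj_on f V" and img: "f ` V = V'"
    using bij by (auto simp: bij_betw_def)
  have edge_V: "e \<subseteq> V" and edge_E': "f ` e \<in> E'" if "e \<in> E" for e
    using that simple edges unfolding simple_graph_def by auto
  have "proper_edge_colouring E (\<lambda>e. c (f ` e))"
    unfolding proper_edge_colouring_def
  proof (intro ballI impI)
    fix e1 e2 assume e: "e1 \<in> E" "e2 \<in> E" "e1 \<noteq> e2 \<and> e1 \<inter> e2 \<noteq> {}"
    have "f ` e1 \<noteq> f ` e2"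
      using e edge_V inj by (metis inj_on_image_eq_iff)
    moreover have "f ` e1 \<inter> f ` e2 \<noteq> {}"
      using e by blast
    moreover have "proper_edge_colouring E' c"
      using colouring by (simp add: proper_rainbow_colouring_def)
    ultimately show "c (f ` e1) \<noteq> c (f ` e2)"
      using edge_E'[OF e(1)] edge_E'[OF e(2)] by (simp add: proper_edge_colouringD)
  qed
  moreover have "rainbow_connected V E (\<lambda>e. c (f ` e))"
    unfolding rainbow_connected_def
  proof (intro ballI impI)
    fix p q assume pq: "p \<in> V" "q \<in> V" "p \<noteq> q"
    then have "f p \<in> V'" "f q \<in> V'" "f p \<noteq> f q"
      using inj img by (auto simp: inj_on_eq_iff)
    moreover have "rainbow_connected V' E' c"
      using colouring by (simp add: proper_rainbow_colouring_def)
    ultimately obtain xs where xs: "rainbow_path V' E' c xs" "hd xs = f p" "last xs = f q"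
      unfolding rainbow_connected_def by blast
    then have "xs \<noteq> []" by (simp add: rainbow_path_def is_path_def)
    with xs pq inj show "\<exists>xs. rainbow_path V E (\<lambda>e. c (f ` e)) xs \<and> hd xs = p \<and> last xs = q"
      by (intro exI[of _ "map (inv_into V f) xs"])
        (simp add: rainbow_path_iso_transfer[OF bij edges] hd_map last_map)
  qed
  ultimately show ?thesis
    using colouring edge_E' by (auto simp: proper_rainbow_colouring_def)
qed

lemma rainbow_colourable_by_degree_iso_transfer:
  assumes "simple_graph V E" "bij_betw f V V'" "\<forall>p\<in>V. \<forall>q\<in>V. {p, q} \<in> E \<longleftrightarrow> {f p, f q} \<in> E'"
    and "proper_rainbow_colouring V' E' c k" "z \<in> V" "k \<le> card (neighbours V E z)"
  shows "rainbow_colourable_by_degree V E"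
  using proper_rainbow_colouring_iso_transfer[OF assms(1-4)] assms(5,6)
  unfolding rainbow_colourable_by_degree_def by blast

locale sgraph =
  fixes V :: "'a set" and E :: "'a set set"
  assumes simple: "simple_graph V E"
begin

lemma finite_V: "finite V"
  using simple by (simp add: simple_graph_def)

lemma edgeE:
  assumes "e \<in> E"
  obtains x y where "x \<in> V" "y \<in> V" "x \<noteq> y" "e = {x, y}"
  using assms simple unfolding simple_graph_def by blast

lemma edge_vertices: "{x, y} \<in> E \<Longrightarrow> x \<in> V \<and> y \<in> V \<and> x \<noteq> y"
  by (erule edgeE) (auto simp: doubleton_eq_iff)

lemma singleton_notin_E [simp]: "{x} \<notin> E"
  using edge_vertices[of x x] by auto

lemma finite_E: "finite E"
proof (rule finite_subset)
  show "E \<subseteq> Pow V" by (blast elim: edgeE)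
qed (simp add: finite_V)

lemma mem_neighbours_iff [simp]: "x \<in> neighbours V E u \<longleftrightarrow> {u, x} \<in> E"
  using edge_vertices by (auto simp: neighbours_def)

lemma finite_neighbours: "finite (neighbours V E u)"
  using finite_V by (simp add: neighbours_def)

lemma edge_iff_ends:
  assumes "p \<in> V" "q \<in> V"
  shows "{p, q} \<in> E \<longleftrightarrow> p \<noteq> q \<and>
    (if p = u then q \<in> neighbours V E u else if q = u then p \<in> neighbours V E u
     else if p = v then q \<in> neighbours V E v else if q = v then p \<in> neighbours V E v
     else {p, q} \<in> E)"
  using assms edge_vertices[of p q] by (auto simp: insert_commute)

lemma rainbow_path_edge: "{a, b} \<in> E \<Longrightarrow> rainbow_path V E c [a, b]"
  using edge_vertices[of a b] by (simp add: rainbow_path_simps)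

lemma edges_cover:
  "E \<subseteq> (\<lambda>w. {u, w}) ` neighbours V E u \<union> (\<lambda>w. {v, w}) ` neighbours V E v \<union>
    {e. e \<subseteq> V - {u, v} \<and> card e = 2}"
proof
  fix e assume "e \<in> E"
  then obtain p q where pq: "p \<in> V" "q \<in> V" "p \<noteq> q" "e = {p, q}" by (rule edgeE)
  consider "u \<in> e" | "v \<in> e" | "u \<notin> e" "v \<notin> e" by blast
  then show "e \<in> (\<lambda>w. {u, w}) ` neighbours V E u \<union> (\<lambda>w. {v, w}) ` neighbours V E v \<union>
      {e. e \<subseteq> V - {u, v} \<and> card e = 2}"
  proof cases
    case 1
    then have "e = {u, q} \<and> q \<in> neighbours V E u \<or> e = {u, p} \<and> p \<in> neighbours V E u"
      using pq \<open>e \<in> E\<close> by (auto simp: insert_commute)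
    then show ?thesis by blast
  next
    case 2
    then have "e = {v, q} \<and> q \<in> neighbours V E v \<or> e = {v, p} \<and> p \<in> neighbours V E v"
      using pq \<open>e \<in> E\<close> by (auto simp: insert_commute)
    then show ?thesis by blast
  next
    case 3
    then show ?thesis using pq by auto
  qed
qed

lemma proper_edge_colouringI:
  assumes "\<And>w q s. {w, q} \<in> E \<Longrightarrow> {w, s} \<in> E \<Longrightarrow> q \<noteq> s \<Longrightarrow> c {w, q} \<noteq> c {w, s}"
  shows "proper_edge_colouring E c"
  unfolding proper_edge_colouring_def
proof (intro ballI impI)
  fix e1 e2 assume e: "e1 \<in> E" "e2 \<in> E" "e1 \<noteq> e2 \<and> e1 \<inter> e2 \<noteq> {}"
  then obtain w where "w \<in> e1" "w \<in> e2" by blast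
  moreover obtain a b where "e1 = {a, b}" using edgeE[OF e(1)] by blast
  moreover obtain a' b' where "e2 = {a', b'}" using edgeE[OF e(2)] by blast
  ultimately obtain q s where "e1 = {w, q}" "e2 = {w, s}" by (auto simp: insert_commute)
  with e assms show "c e1 \<noteq> c e2" by blast
qed

lemma proper_sum_mod_colouring:
  assumes inj: "\<And>w. w \<in> V \<Longrightarrow> inj_on f (neighbours V E w)"
    and less: "\<And>z. z \<in> V \<Longrightarrow> f z < N"
  shows "proper_edge_colouring E (\<lambda>e. (\<Sum>p\<in>e. f p) mod N)"
proof (rule proper_edge_colouringI)
  fix w q s assume wq: "{w, q} \<in> E" and ws: "{w, s} \<in> E" and "q \<noteq> s"
  then have "f q \<noteq> f s"
    using inj[of w] edge_vertices[OF wq] by (auto dest: inj_onD)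
  then have "\<not> [f q = f s] (mod N)"
    using less edge_vertices[OF wq] edge_vertices[OF ws] cong_less_imp_eq_nat by blast
  then have "(f w + f q) mod N \<noteq> (f w + f s) mod N"
    using cong_add_lcancel_nat unfolding cong_def by blast
  then show "(\<Sum>p\<in>{w, q}. f p) mod N \<noteq> (\<Sum>p\<in>{w, s}. f p) mod N"
    using edge_vertices[OF wq] edge_vertices[OF ws] by simp
qed

end

locale coloured_sgraph = sgraph +
  fixes c :: "'a set \<Rightarrow> nat"
  assumes proper: "proper_edge_colouring E c"
begin

lemma colours_differ: "{a, b} \<in> E \<Longrightarrow> {b, d} \<in> E \<Longrightarrow> a \<noteq> d \<Longrightarrow> c {a, b} \<noteq> c {b, d}"
  by (rule proper_edge_colouringD[OF proper]) (auto simp: doubleton_eq_iff)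

lemma card_le_1_if_same_colour:
  assumes "C \<subseteq> neighbours V E z" and "\<And>w. w \<in> C \<Longrightarrow> c {z, w} = \<alpha>"
  shows "card C \<le> 1"
proof -
  have "w1 = w2" if "w1 \<in> C" "w2 \<in> C" for w1 w2
  proof -
    have "{w1, z} \<in> E" "{z, w2} \<in> E" "c {w1, z} = c {z, w2}"
      using assms that by (auto simp: insert_commute)
    then show ?thesis using colours_differ[of w1 z w2] by blast
  qed
  then show ?thesis
    using card_le_Suc0_iff_eq[OF finite_subset[OF assms(1) finite_neighbours]] by simp
qed

lemma rainbow_path_two_edges:
  "{a, b} \<in> E \<Longrightarrow> {b, d} \<in> E \<Longrightarrow> a \<noteq> d \<Longrightarrow> rainbow_path V E c [a, b, d]"
  using edge_vertices[of a b] edge_vertices[of b d] colours_differ[of a b d]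
  by (simp add: rainbow_path_simps)

lemma rainbow_path_three_edges:
  "{a, b} \<in> E \<Longrightarrow> {b, d} \<in> E \<Longrightarrow> {d, e} \<in> E \<Longrightarrow> distinct [a, b, d, e] \<Longrightarrow>
    c {a, b} \<noteq> c {d, e} \<Longrightarrow> rainbow_path V E c [a, b, d, e]"
  using edge_vertices[of a b] edge_vertices[of b d] edge_vertices[of d e]
    colours_differ[of a b d] colours_differ[of b d e]
  by (simp add: rainbow_path_simps)

lemma rainbow_path_four_edges:
  "{a, b} \<in> E \<Longrightarrow> {b, d} \<in> E \<Longrightarrow> {d, e} \<in> E \<Longrightarrow> {e, g} \<in> E \<Longrightarrow> distinct [a, b, d, e, g] \<Longrightarrow>
    c {a, b} \<noteq> c {d, e} \<Longrightarrow> c {a, b} \<noteq> c {e, g} \<Longrightarrow> c {b, d} \<noteq> c {e, g} \<Longrightarrow>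
    rainbow_path V E c [a, b, d, e, g]"
  using edge_vertices[of a b] edge_vertices[of b d] edge_vertices[of d e] edge_vertices[of e g]
    colours_differ[of a b d] colours_differ[of b d e] colours_differ[of d e g]
  by (simp add: rainbow_path_simps)

lemma rainbow_connectedI_near:
  assumes near: "\<forall>p\<in>V. \<forall>q\<in>V. p \<noteq> q \<longrightarrow>
      {p, q} \<in> E \<or> (\<exists>w\<in>V. {p, w} \<in> E \<and> {w, q} \<in> E) \<or> (p, q) \<in> F \<or> (q, p) \<in> F"
    and far: "\<And>p q. (p, q) \<in> F \<Longrightarrow> \<exists>xs. rainbow_path V E c xs \<and> hd xs = p \<and> last xs = q"
  shows "rainbow_connected V E c"
proof (rule rainbow_connectedI_sym)
  fix p q assume pq: "p \<in> V" "q \<in> V" "p \<noteq> q"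
  show "(\<exists>xs. rainbow_path V E c xs \<and> hd xs = p \<and> last xs = q) \<or>
        (\<exists>xs. rainbow_path V E c xs \<and> hd xs = q \<and> last xs = p)"
  proof (cases "(p, q) \<in> F \<or> (q, p) \<in> F")
    case False
    then consider "{p, q} \<in> E" | w where "{p, w} \<in> E" "{w, q} \<in> E"
      using near pq by blast
    then show ?thesis
    proof cases
      case 1 then show ?thesis using rainbow_path_edge by fastforce
    next
      case 2 then show ?thesis using rainbow_path_two_edges[of p w q] pq(3) by fastforce
    qed
  qed (use far in blast)
qed

lemma proper_rainbow_colouringI:
  assumes "\<And>e. c e < k"
    and "\<forall>p\<in>V. \<forall>q\<in>V. p \<noteq> q \<longrightarrow>
      {p, q} \<in> E \<or> (\<exists>w\<in>V. {p, w} \<in> E \<and> {w, q} \<in> E) \<or> (p, q) \<in> F \<or> (q, p) \<in> F"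
    and "\<And>p q. (p, q) \<in> F \<Longrightarrow> \<exists>xs. rainbow_path V E c xs \<and> hd xs = p \<and> last xs = q"
  shows "proper_rainbow_colouring V E c k"
  using assms(1) proper rainbow_connectedI_near[OF assms(2,3)]
  unfolding proper_rainbow_colouring_def by auto

end

lemma simple_graph_of_pairs:
  "finite V \<Longrightarrow> \<forall>(a, b)\<in>set ps. a \<in> V \<and> b \<in> V \<and> a \<noteq> b \<Longrightarrow>
    simple_graph V ((\<lambda>(a, b). {a, b}) ` set ps)"
  unfolding simple_graph_def by fastforce

text \<open>Besides P4, Z2 and G_{6.3} the argument meets the following graphs: Z2, labelled so that
  0 and 4 are the rainbow-separated pair, plus a vertex joined to all vertices but these two; and
  G_{6.3}, labelled so that 0 and 5 are that pair, plus one vertex or two adjacent vertices joined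
  to all vertices but these two.\<close>

definition Z2_plus1_V :: "nat set" where "Z2_plus1_V = {0, 1, 2, 3, 4, 5}"
definition Z2_plus1_E :: "nat set set" where
  "Z2_plus1_E = {{0, 1}, {2, 4}, {3, 4}, {1, 2}, {1, 5}, {2, 3}, {2, 5}, {3, 5}}"
definition Z2_plus1_c :: "nat set \<Rightarrow> nat" where
  "Z2_plus1_c e = (if e = {0, 1} then 0 else if e = {2, 4} then 0 else if e = {3, 4} then 1
    else if e = {1, 2} then 2 else if e = {1, 5} then 3 else if e = {2, 3} then 3
    else if e = {2, 5} then 1 else 0)"

definition G63_plus1_V :: "nat set" where "G63_plus1_V = {0, 1, 2, 3, 4, 5, 6}"
definition G63_plus1_E :: "nat set set" where
  "G63_plus1_E = {{0, 1}, {0, 2}, {3, 5}, {4, 5}, {1, 2}, {1, 3}, {1, 6}, {2, 4}, {2, 6}, {3, 4},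
    {3, 6}, {4, 6}}"
definition G63_plus1_c :: "nat set \<Rightarrow> nat" where
  "G63_plus1_c e = (if e = {0, 1} then 0 else if e = {0, 2} then 1 else if e = {3, 5} then 2
    else if e = {4, 5} then 3 else if e = {1, 2} then 2 else if e = {1, 3} then 3
    else if e = {1, 6} then 1 else if e = {2, 4} then 0 else if e = {2, 6} then 3
    else if e = {3, 4} then 1 else if e = {3, 6} then 0 else 2)"

definition G63_plus2_V :: "nat set" where "G63_plus2_V = {0, 1, 2, 3, 4, 5, 6, 7}"
definition G63_plus2_E :: "nat set set" where
  "G63_plus2_E = {{0, 1}, {0, 2}, {3, 5}, {4, 5}, {1, 2}, {1, 3}, {1, 6}, {1, 7}, {2, 4}, {2, 6},
    {2, 7}, {3, 4}, {3, 6}, {3, 7}, {4, 6}, {4, 7}, {6, 7}}"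
definition G63_plus2_c :: "nat set \<Rightarrow> nat" where
  "G63_plus2_c e = (if e = {0, 1} then 0 else if e = {0, 2} then 1 else if e = {3, 5} then 0
    else if e = {4, 5} then 1 else if e = {1, 2} then 2 else if e = {1, 3} then 1
    else if e = {1, 6} then 3 else if e = {1, 7} then 4 else if e = {2, 4} then 3
    else if e = {2, 6} then 4 else if e = {2, 7} then 0 else if e = {3, 4} then 4
    else if e = {3, 6} then 2 else if e = {3, 7} then 3 else if e = {4, 6} then 0
    else if e = {4, 7} then 2 else 1)"

lemma Z2_plus1_rainbow_colouring: "proper_rainbow_colouring Z2_plus1_V Z2_plus1_E Z2_plus1_c 4"
proof -
  have edges: "Z2_plus1_E =
      (\<lambda>(a, b). {a, b}) ` set [(0, 1), (2, 4), (3, 4), (1, 2), (1, 5), (2, 3), (2, 5), (3, 5)]"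
    by (simp add: Z2_plus1_E_def)
  have "simple_graph Z2_plus1_V Z2_plus1_E"
    unfolding edges by (rule simple_graph_of_pairs) (simp_all add: Z2_plus1_V_def)
  moreover have "proper_edge_colouring Z2_plus1_E Z2_plus1_c"
    unfolding proper_edge_colouring_def Z2_plus1_E_def by (simp add: Z2_plus1_c_def doubleton_eq_iff)
  ultimately interpret coloured_sgraph Z2_plus1_V Z2_plus1_E Z2_plus1_c
    by unfold_locales
  show ?thesis
  proof (rule proper_rainbow_colouringI[where F = "{(0, 4), (0, 3)}"])
    show "Z2_plus1_c e < 4" for e
      by (simp add: Z2_plus1_c_def)
    show "\<forall>p\<in>Z2_plus1_V. \<forall>q\<in>Z2_plus1_V. p \<noteq> q \<longrightarrow> {p, q} \<in> Z2_plus1_E \<or>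
        (\<exists>w\<in>Z2_plus1_V. {p, w} \<in> Z2_plus1_E \<and> {w, q} \<in> Z2_plus1_E) \<or>
        (p, q) \<in> {(0, 4), (0, 3)} \<or> (q, p) \<in> {(0, 4), (0, 3)}"
      unfolding Z2_plus1_V_def Z2_plus1_E_def by (simp add: doubleton_eq_iff)
    show "\<exists>xs. rainbow_path Z2_plus1_V Z2_plus1_E Z2_plus1_c xs \<and> hd xs = p \<and> last xs = q"
      if "(p, q) \<in> {(0, 4), (0, 3)}" for p q
    proof -
      have "rainbow_path Z2_plus1_V Z2_plus1_E Z2_plus1_c [0, 1, 2, 3, 4]"
        "rainbow_path Z2_plus1_V Z2_plus1_E Z2_plus1_c [0, 1, 2, 3]"
        by (simp_all add: rainbow_path_simps Z2_plus1_V_def Z2_plus1_E_def Z2_plus1_c_def doubleton_eq_iff)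
      with that show ?thesis by force
    qed
  qed
qed

lemma G63_plus1_rainbow_colouring: "proper_rainbow_colouring G63_plus1_V G63_plus1_E G63_plus1_c 4"
proof -
  have edges: "G63_plus1_E = (\<lambda>(a, b). {a, b}) ` set [(0, 1), (0, 2), (3, 5), (4, 5), (1, 2), (1, 3),
      (1, 6), (2, 4), (2, 6), (3, 4), (3, 6), (4, 6)]"
    by (simp add: G63_plus1_E_def)
  have "simple_graph G63_plus1_V G63_plus1_E"
    unfolding edges by (rule simple_graph_of_pairs) (simp_all add: G63_plus1_V_def)
  moreover have "proper_edge_colouring G63_plus1_E G63_plus1_c"
    unfolding proper_edge_colouring_def G63_plus1_E_def by (simp add: G63_plus1_c_def doubleton_eq_iff)
  ultimately interpret coloured_sgraph G63_plus1_V G63_plus1_E G63_plus1_c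
    by unfold_locales
  show ?thesis
  proof (rule proper_rainbow_colouringI[where F = "{(0, 5)}"])
    show "G63_plus1_c e < 4" for e
      by (simp add: G63_plus1_c_def)
    show "\<forall>p\<in>G63_plus1_V. \<forall>q\<in>G63_plus1_V. p \<noteq> q \<longrightarrow> {p, q} \<in> G63_plus1_E \<or>
        (\<exists>w\<in>G63_plus1_V. {p, w} \<in> G63_plus1_E \<and> {w, q} \<in> G63_plus1_E) \<or>
        (p, q) \<in> {(0, 5)} \<or> (q, p) \<in> {(0, 5)}"
      unfolding G63_plus1_V_def G63_plus1_E_def by (simp add: doubleton_eq_iff)
    have "rainbow_path G63_plus1_V G63_plus1_E G63_plus1_c [0, 1, 3, 5]"
      by (simp add: rainbow_path_simps G63_plus1_V_def G63_plus1_E_def G63_plus1_c_def doubleton_eq_iff)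
    then show "\<exists>xs. rainbow_path G63_plus1_V G63_plus1_E G63_plus1_c xs \<and> hd xs = p \<and> last xs = q"
      if "(p, q) \<in> {(0, 5)}" for p q
      using that by force
  qed
qed

lemma G63_plus2_rainbow_colouring: "proper_rainbow_colouring G63_plus2_V G63_plus2_E G63_plus2_c 5"
proof -
  have edges: "G63_plus2_E = (\<lambda>(a, b). {a, b}) ` set [(0, 1), (0, 2), (3, 5), (4, 5), (1, 2), (1, 3),
      (1, 6), (1, 7), (2, 4), (2, 6), (2, 7), (3, 4), (3, 6), (3, 7), (4, 6), (4, 7), (6, 7)]"
    by (simp add: G63_plus2_E_def)
  have "simple_graph G63_plus2_V G63_plus2_E"
    unfolding edges by (rule simple_graph_of_pairs) (simp_all add: G63_plus2_V_def)
  moreover have "proper_edge_colouring G63_plus2_E G63_plus2_c"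
    unfolding proper_edge_colouring_def G63_plus2_E_def by (simp add: G63_plus2_c_def doubleton_eq_iff)
  ultimately interpret coloured_sgraph G63_plus2_V G63_plus2_E G63_plus2_c
    by unfold_locales
  show ?thesis
  proof (rule proper_rainbow_colouringI[where F = "{(0, 5)}"])
    show "G63_plus2_c e < 5" for e
      by (simp add: G63_plus2_c_def)
    show "\<forall>p\<in>G63_plus2_V. \<forall>q\<in>G63_plus2_V. p \<noteq> q \<longrightarrow> {p, q} \<in> G63_plus2_E \<or>
        (\<exists>w\<in>G63_plus2_V. {p, w} \<in> G63_plus2_E \<and> {w, q} \<in> G63_plus2_E) \<or>
        (p, q) \<in> {(0, 5)} \<or> (q, p) \<in> {(0, 5)}"
      unfolding G63_plus2_V_def G63_plus2_E_def by (simp add: doubleton_eq_iff)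
    have "rainbow_path G63_plus2_V G63_plus2_E G63_plus2_c [0, 1, 2, 4, 5]"
      by (simp add: rainbow_path_simps G63_plus2_V_def G63_plus2_E_def G63_plus2_c_def doubleton_eq_iff)
    then show "\<exists>xs. rainbow_path G63_plus2_V G63_plus2_E G63_plus2_c xs \<and> hd xs = p \<and> last xs = q"
      if "(p, q) \<in> {(0, 5)}" for p q
      using that by force
  qed
qed

locale P4_configuration = sgraph +
  fixes u x y v :: 'a
  assumes distinct: "distinct [u, x, y, v]" and subset: "{u, x, y, v} \<subseteq> V"
    and neighbours_u: "neighbours V E u = {x}" and neighbours_v: "neighbours V E v = {y}"
    and core_clique: "\<And>p q. p \<in> V - {u, v} \<Longrightarrow> q \<in> V - {u, v} \<Longrightarrow> p \<noteq> q \<Longrightarrow> {p, q} \<in> E"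
begin

lemma edge_iff:
  assumes "p \<in> V" "q \<in> V"
  shows "{p, q} \<in> E \<longleftrightarrow> p \<noteq> q \<and> (if p = u then q = x else if q = u then p = x
    else if p = v then q = y else if q = v then p = y else True)"
  using edge_iff_ends[OF assms, of u v] core_clique[of p q] assms
  by (auto simp: neighbours_u neighbours_v)

lemma edge_u_iff: "{u, w} \<in> E \<longleftrightarrow> w = x"
  and edge_v_iff: "{v, w} \<in> E \<longleftrightarrow> w = y"
  using mem_neighbours_iff[of w u] mem_neighbours_iff[of w v] neighbours_u neighbours_v by simp_all

lemma hub_x: "r \<in> V \<Longrightarrow> r \<notin> {x, v} \<Longrightarrow> {x, r} \<in> E"
  and hub_y: "r \<in> V \<Longrightarrow> r \<notin> {y, u} \<Longrightarrow> {y, r} \<in> E"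
  using core_clique[of x r] core_clique[of y r] edge_u_iff[of x] edge_v_iff[of y] subset distinct
  by (auto simp: insert_commute)

lemma near_except_ends:
  assumes "p \<in> V" "q \<in> V" "p \<noteq> q" "{p, q} \<noteq> {u, v}"
  shows "{p, q} \<in> E \<or> {p, x} \<in> E \<and> {x, q} \<in> E \<or> {p, y} \<in> E \<and> {y, q} \<in> E"
proof -
  have ux: "{u, x} \<in> E" "{x, u} \<in> E" and vy: "{v, y} \<in> E" "{y, v} \<in> E"
    using edge_u_iff[of x] edge_v_iff[of y] by (simp_all add: insert_commute)
  have hx: "{x, r} \<in> E" "{r, x} \<in> E" if "r \<in> V" "r \<notin> {x, v}" for r
    using hub_x[OF that] by (simp_all add: insert_commute)
  have hy: "{y, r} \<in> E" "{r, y} \<in> E" if "r \<in> V" "r \<notin> {y, u}" for r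
    using hub_y[OF that] by (simp_all add: insert_commute)
  have "u \<noteq> v"
    using distinct by simp
  then consider "p \<notin> {u, v}" "q \<notin> {u, v}" | "p = u" "q \<notin> {u, v}" | "p = v" "q \<notin> {u, v}"
    | "q = u" "p \<notin> {u, v}" | "q = v" "p \<notin> {u, v}"
    using assms by (auto simp: doubleton_eq_iff)
  then show ?thesis
  proof cases
    case 1 then show ?thesis using assms core_clique by blast
  next
    case 2 then show ?thesis using ux hx[of q] assms(2) by (cases "q = x") auto
  next
    case 3 then show ?thesis using vy hy[of q] assms(2) by (cases "q = y") auto
  next
    case 4 then show ?thesis using ux hx[of p] assms(1) by (cases "p = x") auto
  next
    case 5 then show ?thesis using vy hy[of p] assms(1) by (cases "p = y") auto
  qed
qed

lemma vertices_ne: "u \<noteq> x" "u \<noteq> y" "u \<noteq> v" "x \<noteq> y" "x \<noteq> v" "y \<noteq> v"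
  using distinct by auto

lemma iso_P4:
  assumes V: "V = {u, x, y, v}"
  shows "graph_iso V E P4_V P4_E"
proof -
  define f where "f z = (if z = u then 0 else if z = x then 1 else if z = y then 2 else 3::nat)" for z
  have "bij_betw f V P4_V"
    using vertices_ne unfolding bij_betw_def V P4_V_def by (simp add: f_def inj_on_def insert_commute)
  moreover have "\<forall>p\<in>V. \<forall>q\<in>V. {p, q} \<in> E \<longleftrightarrow> {f p, f q} \<in> P4_E"
    using vertices_ne by (simp add: V edge_iff f_def P4_E_def doubleton_eq_iff)
  ultimately show ?thesis
    unfolding graph_iso_def by blast
qed

lemma clique_labelling:
  assumes five: "5 \<le> card V"
  obtains f where "\<And>p. p \<in> V \<Longrightarrow> f p < card V - 2" "\<And>w. w \<in> V \<Longrightarrow> inj_on f (neighbours V E w)"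
    "f u = 0" "f x = 0" "f y = 1" "f v = 1"
proof -
  let ?R = "V - {u, x, y, v}"
  have "card ?R = card V - 4"
    using card_Diff_subset[OF _ subset] distinct by simp
  then obtain g where g: "bij_betw g ?R {0..<card V - 4}"
    using ex_bij_betw_finite_nat[of ?R] finite_V by auto
  define f where "f p = (if p = u \<or> p = x then 0 else if p = y \<or> p = v then 1 else g p + 2)" for p
  have f_less: "f p < card V - 2" if "p \<in> V" for p
    using that five bij_betw_apply[OF g, of p] by (auto simp: f_def)
  have f_eq: "p = q \<or> {p, q} \<subseteq> {u, x} \<or> {p, q} \<subseteq> {y, v}" if "p \<in> V" "q \<in> V" "f p = f q" for p q
    using that bij_betw_imp_inj_on[OF g] by (auto simp: f_def split: if_splits dest: inj_onD)
  have "inj_on f (neighbours V E w)" if "w \<in> V" for w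
  proof (rule inj_onI, rule ccontr)
    fix p q assume "p \<in> neighbours V E w" "q \<in> neighbours V E w" "f p = f q" "p \<noteq> q"
    then have "{w, u} \<in> E \<and> {w, x} \<in> E \<or> {w, y} \<in> E \<and> {w, v} \<in> E"
      using f_eq[of p q] edge_vertices by auto
    then show False
      using edge_u_iff[of w] edge_v_iff[of w] by (auto simp: insert_commute)
  qed
  moreover have "f u = 0" "f x = 0" "f y = 1" "f v = 1"
    using distinct by (auto simp: f_def)
  ultimately show ?thesis
    using that f_less by blast
qed

text \<open>Colour each edge by the sum of the labels of its ends mod card V - 2; as u and v carry the
  labels of x and y, the path u x y v gets the colours 0, 1, 2.\<close>
lemma rainbow_colourable:
  assumes five: "5 \<le> card V"
  shows "rainbow_colourable_by_degree V E"
proof -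
  have in_V: "u \<in> V" "x \<in> V" "y \<in> V" "v \<in> V"
    using subset by auto
  define N where "N = card V - 2"
  obtain f where f_less: "\<And>p. p \<in> V \<Longrightarrow> f p < N"
    and inj: "\<And>w. w \<in> V \<Longrightarrow> inj_on f (neighbours V E w)"
    and labels: "f u = 0" "f x = 0" "f y = 1" "f v = 1"
    unfolding N_def using clique_labelling[OF five] by metis
  define col where "col e = (\<Sum>p\<in>e. f p) mod N" for e
  have proper: "proper_edge_colouring E col"
    unfolding col_def using inj f_less by (rule proper_sum_mod_colouring)
  interpret coloured_sgraph V E col
    by unfold_locales (rule proper)
  have path: "rainbow_path V E col [u, x, y, v]"
  proof (rule rainbow_path_three_edges)
    show "{u, x} \<in> E" "{y, v} \<in> E" "{x, y} \<in> E"
      using edge_u_iff[of x] edge_v_iff[of y] hub_x[of y] in_V distinct by (auto simp: insert_commute)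
    show "col {u, x} \<noteq> col {y, v}"
      using labels distinct five by (simp add: col_def N_def)
  qed (use distinct in simp)
  have "proper_rainbow_colouring V E col N"
  proof (rule proper_rainbow_colouringI[where F = "{(u, v)}"])
    show "col e < N" for e
      using five by (simp add: col_def N_def)
    show "\<forall>p\<in>V. \<forall>q\<in>V. p \<noteq> q \<longrightarrow> {p, q} \<in> E \<or> (\<exists>w\<in>V. {p, w} \<in> E \<and> {w, q} \<in> E) \<or>
        (p, q) \<in> {(u, v)} \<or> (q, p) \<in> {(u, v)}"
    proof (intro ballI impI)
      fix p q assume pq: "p \<in> V" "q \<in> V" "p \<noteq> q"
      show "{p, q} \<in> E \<or> (\<exists>w\<in>V. {p, w} \<in> E \<and> {w, q} \<in> E) \<or>
        (p, q) \<in> {(u, v)} \<or> (q, p) \<in> {(u, v)}"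
      proof (cases "{p, q} = {u, v}")
        case False
        then show ?thesis using near_except_ends[OF pq False] in_V by blast
      qed (auto simp: doubleton_eq_iff)
    qed
  qed (use path in auto)
  moreover have "N \<le> card (neighbours V E x)"
  proof -
    have "V - {x, v} \<subseteq> neighbours V E x"
      using hub_x by (simp add: subset_iff)
    moreover have "card (V - {x, v}) = N"
      using in_V distinct finite_V by (simp add: N_def card_Diff_subset)
    ultimately show ?thesis
      using card_mono[OF finite_neighbours] by fastforce
  qed
  ultimately show ?thesis
    unfolding rainbow_colourable_by_degree_def using in_V by blast
qed

lemma P4_or_rainbow_colourable: "graph_iso V E P4_V P4_E \<or> rainbow_colourable_by_degree V E"
proof (cases "card V = 4")
  case True
  moreover have "card {u, x, y, v} = 4"
    using distinct by simp
  ultimately have "V = {u, x, y, v}"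
    using card_subset_eq[OF finite_V subset] by simp
  then show ?thesis using iso_P4 by blast
next
  case False
  moreover have "4 \<le> card V"
    using card_mono[OF finite_V subset] distinct by simp
  ultimately show ?thesis using rainbow_colourable by simp
qed
end

lemma card_le_2_cases:
  assumes "finite A" "card A \<le> 2"
  obtains "A = {}" | w where "A = {w}" | w1 w2 where "w1 \<noteq> w2" "A = {w1, w2}"
proof -
  consider "card A = 0" | "card A = 1" | "card A = 2"
    using assms(2) by linarith
  then show ?thesis
  proof cases
    case 1
    with assms(1) that(1) show ?thesis by simp
  next
    case 2
    then obtain w where "A = {w}" by (rule card_1_singletonE)
    with that(2) show ?thesis .
  next
    case 3
    with that(3) show ?thesis by (auto simp: card_2_iff)
  qed
qed

locale Z2_configuration = sgraph +
  fixes u x y0 y1 v :: 'a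
  assumes distinct: "distinct [u, x, y0, y1, v]" and subset: "{u, x, y0, y1, v} \<subseteq> V"
    and neighbours_u: "neighbours V E u = {x}" and neighbours_v: "neighbours V E v = {y0, y1}"
    and core_edges: "\<And>p q. p \<in> V - {u, v} \<Longrightarrow> q \<in> V - {u, v} \<Longrightarrow> p \<noteq> q \<Longrightarrow>
      {p, q} \<in> E \<longleftrightarrow> {p, q} \<noteq> {x, y1}"
begin

lemma edge_iff:
  assumes "p \<in> V" "q \<in> V"
  shows "{p, q} \<in> E \<longleftrightarrow> p \<noteq> q \<and> (if p = u then q = x else if q = u then p = x
    else if p = v then q = y0 \<or> q = y1 else if q = v then p = y0 \<or> p = y1 else {p, q} \<noteq> {x, y1})"
  using edge_iff_ends[OF assms, of u v] core_edges[of p q] assms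
  by (auto simp: neighbours_u neighbours_v)

lemma vertices_ne: "u \<noteq> x" "u \<noteq> y0" "u \<noteq> y1" "u \<noteq> v" "x \<noteq> y0" "x \<noteq> y1" "x \<noteq> v"
  "y0 \<noteq> y1" "y0 \<noteq> v" "y1 \<noteq> v"
  using distinct by auto

lemma iso_Z2:
  assumes V: "V = {u, x, y0, y1, v}"
  shows "graph_iso V E Z2_V Z2_E"
proof -
  define f where
    "f z = (if z = u then 4 else if z = x then 3 else if z = y0 then 0 else if z = y1 then 1 else 2::nat)"
    for z
  have "bij_betw f V Z2_V"
    using vertices_ne unfolding bij_betw_def V Z2_V_def by (simp add: f_def inj_on_def insert_commute)
  moreover have "\<forall>p\<in>V. \<forall>q\<in>V. {p, q} \<in> E \<longleftrightarrow> {f p, f q} \<in> Z2_E"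
    using vertices_ne by (simp add: V edge_iff f_def Z2_E_def doubleton_eq_iff)
  ultimately show ?thesis
    unfolding graph_iso_def by blast
qed

lemma rainbow_colourable_plus_vertex:
  assumes V: "V = {u, x, y0, y1, v, w}" and w: "w \<notin> {u, x, y0, y1, v}"
  shows "rainbow_colourable_by_degree V E"
proof -
  define f where "f z = (if z = u then 0 else if z = x then 1 else if z = y0 then 2
    else if z = y1 then 3 else if z = v then 4 else 5::nat)" for z
  have w_ne: "u \<noteq> w" "x \<noteq> w" "y0 \<noteq> w" "y1 \<noteq> w" "v \<noteq> w"
    using w by auto
  have bij: "bij_betw f V Z2_plus1_V"
    using vertices_ne w_ne unfolding bij_betw_def V Z2_plus1_V_def by (simp add: f_def inj_on_def insert_commute)
  have edges: "\<forall>p\<in>V. \<forall>q\<in>V. {p, q} \<in> E \<longleftrightarrow> {f p, f q} \<in> Z2_plus1_E"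
    using vertices_ne w_ne by (simp add: V edge_iff f_def Z2_plus1_E_def doubleton_eq_iff)
  have "{w, x, y1, v} \<subseteq> neighbours V E y0"
    unfolding insert_subset mem_neighbours_iff using vertices_ne w_ne by (simp add: V edge_iff doubleton_eq_iff)
  moreover have "card {w, x, y1, v} = 4"
    using vertices_ne w_ne by simp
  ultimately have "4 \<le> card (neighbours V E y0)"
    by (metis card_mono finite_neighbours)
  then show ?thesis
    using rainbow_colourable_by_degree_iso_transfer[OF simple bij edges Z2_plus1_rainbow_colouring]
      subset by blast
qed

lemma Z2_or_rainbow_colourable:
  assumes "card (V - {u, x, y0, y1, v}) \<le> 1"
  shows "graph_iso V E Z2_V Z2_E \<or> rainbow_colourable_by_degree V E"
proof -
  have "finite (V - {u, x, y0, y1, v})"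
    using finite_V by simp
  then show ?thesis
  proof (rule card_le_2_cases)
    assume "V - {u, x, y0, y1, v} = {}"
    then have "V = {u, x, y0, y1, v}" using subset by blast
    then show ?thesis using iso_Z2 by blast
  next
    fix w assume "V - {u, x, y0, y1, v} = {w}"
    then have "V = {u, x, y0, y1, v, w}" "w \<notin> {u, x, y0, y1, v}" using subset by blast+
    then show ?thesis using rainbow_colourable_plus_vertex by blast
  qed (use assms in auto)
qed

end

locale G63_configuration = sgraph +
  fixes u x0 x1 y0 y1 v :: 'a
  assumes distinct: "distinct [u, x0, x1, y0, y1, v]" and subset: "{u, x0, x1, y0, y1, v} \<subseteq> V"
    and neighbours_u: "neighbours V E u = {x0, x1}" and neighbours_v: "neighbours V E v = {y0, y1}"
    and core_edges: "\<And>p q. p \<in> V - {u, v} \<Longrightarrow> q \<in> V - {u, v} \<Longrightarrow> p \<noteq> q \<Longrightarrow>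
      {p, q} \<in> E \<longleftrightarrow> {p, q} \<noteq> {x0, y1} \<and> {p, q} \<noteq> {x1, y0}"
begin

lemma edge_iff:
  assumes "p \<in> V" "q \<in> V"
  shows "{p, q} \<in> E \<longleftrightarrow> p \<noteq> q \<and> (if p = u then q = x0 \<or> q = x1 else if q = u then p = x0 \<or> p = x1
    else if p = v then q = y0 \<or> q = y1 else if q = v then p = y0 \<or> p = y1
    else {p, q} \<noteq> {x0, y1} \<and> {p, q} \<noteq> {x1, y0})"
  using edge_iff_ends[OF assms, of u v] core_edges[of p q] assms
  by (auto simp: neighbours_u neighbours_v)

lemma vertices_ne: "u \<noteq> x0" "u \<noteq> x1" "u \<noteq> y0" "u \<noteq> y1" "u \<noteq> v" "x0 \<noteq> x1" "x0 \<noteq> y0" "x0 \<noteq> y1"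
  "x0 \<noteq> v" "x1 \<noteq> y0" "x1 \<noteq> y1" "x1 \<noteq> v" "y0 \<noteq> y1" "y0 \<noteq> v" "y1 \<noteq> v"
  using distinct by auto

lemma iso_G63:
  assumes V: "V = {u, x0, x1, y0, y1, v}"
  shows "graph_iso V E G63_V G63_E"
proof -
  define f where "f z = (if z = u then 3 else if z = x0 then 0 else if z = x1 then 2
    else if z = y0 then 1 else if z = y1 then 5 else 4::nat)" for z
  have "bij_betw f V G63_V"
    using vertices_ne unfolding bij_betw_def V G63_V_def by (simp add: f_def inj_on_def insert_commute)
  moreover have "\<forall>p\<in>V. \<forall>q\<in>V. {p, q} \<in> E \<longleftrightarrow> {f p, f q} \<in> G63_E"
    using vertices_ne by (simp add: V edge_iff f_def G63_E_def doubleton_eq_iff)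
  ultimately show ?thesis
    unfolding graph_iso_def by blast
qed

lemma rainbow_colourable_plus_vertex:
  assumes V: "V = {u, x0, x1, y0, y1, v, w}" and w: "w \<notin> {u, x0, x1, y0, y1, v}"
  shows "rainbow_colourable_by_degree V E"
proof -
  define f where "f z = (if z = u then 0 else if z = x0 then 1 else if z = x1 then 2
    else if z = y0 then 3 else if z = y1 then 4 else if z = v then 5 else 6::nat)" for z
  have w_ne: "u \<noteq> w" "x0 \<noteq> w" "x1 \<noteq> w" "y0 \<noteq> w" "y1 \<noteq> w" "v \<noteq> w"
    using w by auto
  have bij: "bij_betw f V G63_plus1_V"
    using vertices_ne w_ne unfolding bij_betw_def V G63_plus1_V_def by (simp add: f_def inj_on_def insert_commute)
  have edges: "\<forall>p\<in>V. \<forall>q\<in>V. {p, q} \<in> E \<longleftrightarrow> {f p, f q} \<in> G63_plus1_E"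
    using vertices_ne w_ne by (simp add: V edge_iff f_def G63_plus1_E_def doubleton_eq_iff)
  have "{w, u, x1, y0} \<subseteq> neighbours V E x0"
    unfolding insert_subset mem_neighbours_iff using vertices_ne w_ne by (simp add: V edge_iff doubleton_eq_iff)
  moreover have "card {w, u, x1, y0} = 4"
    using vertices_ne w_ne by simp
  ultimately have "4 \<le> card (neighbours V E x0)"
    by (metis card_mono finite_neighbours)
  then show ?thesis
    using rainbow_colourable_by_degree_iso_transfer[OF simple bij edges G63_plus1_rainbow_colouring]
      subset by blast
qed

lemma rainbow_colourable_plus_edge:
  assumes V: "V = {u, x0, x1, y0, y1, v, w1, w2}" and w: "w1 \<notin> {u, x0, x1, y0, y1, v}"
    "w2 \<notin> {u, x0, x1, y0, y1, v}" "w1 \<noteq> w2"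
  shows "rainbow_colourable_by_degree V E"
proof -
  define f where "f z = (if z = u then 0 else if z = x0 then 1 else if z = x1 then 2
    else if z = y0 then 3 else if z = y1 then 4 else if z = v then 5 else if z = w1 then 6 else 7::nat)"
    for z
  have w_ne: "u \<noteq> w1" "x0 \<noteq> w1" "x1 \<noteq> w1" "y0 \<noteq> w1" "y1 \<noteq> w1" "v \<noteq> w1"
    "u \<noteq> w2" "x0 \<noteq> w2" "x1 \<noteq> w2" "y0 \<noteq> w2" "y1 \<noteq> w2" "v \<noteq> w2" "w1 \<noteq> w2"
    using w by auto
  have bij: "bij_betw f V G63_plus2_V"
    using vertices_ne w_ne unfolding bij_betw_def V G63_plus2_V_def by (simp add: f_def inj_on_def insert_commute)
  have edges: "\<forall>p\<in>V. \<forall>q\<in>V. {p, q} \<in> E \<longleftrightarrow> {f p, f q} \<in> G63_plus2_E"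
    using vertices_ne w_ne by (simp add: V edge_iff f_def G63_plus2_E_def doubleton_eq_iff)
  have "{w1, w2, u, x1, y0} \<subseteq> neighbours V E x0"
    unfolding insert_subset mem_neighbours_iff using vertices_ne w_ne by (simp add: V edge_iff doubleton_eq_iff)
  moreover have "card {w1, w2, u, x1, y0} = 5"
    using vertices_ne w_ne by simp
  ultimately have "5 \<le> card (neighbours V E x0)"
    by (metis card_mono finite_neighbours)
  then show ?thesis
    using rainbow_colourable_by_degree_iso_transfer[OF simple bij edges G63_plus2_rainbow_colouring]
      subset by blast
qed

lemma G63_or_rainbow_colourable:
  assumes "card (V - {u, x0, x1, y0, y1, v}) \<le> 2"
  shows "graph_iso V E G63_V G63_E \<or> rainbow_colourable_by_degree V E"
proof -
  have "finite (V - {u, x0, x1, y0, y1, v})"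
    using finite_V by simp
  then show ?thesis
  proof (rule card_le_2_cases)
    assume "V - {u, x0, x1, y0, y1, v} = {}"
    then have "V = {u, x0, x1, y0, y1, v}" using subset by blast
    then show ?thesis using iso_G63 by blast
  next
    fix w assume "V - {u, x0, x1, y0, y1, v} = {w}"
    then have "V = {u, x0, x1, y0, y1, v, w}" "w \<notin> {u, x0, x1, y0, y1, v}" using subset by blast+
    then show ?thesis using rainbow_colourable_plus_vertex by blast
  next
    fix w1 w2 assume "w1 \<noteq> w2" "V - {u, x0, x1, y0, y1, v} = {w1, w2}"
    then have "V = {u, x0, x1, y0, y1, v, w1, w2}" "w1 \<notin> {u, x0, x1, y0, y1, v}"
      "w2 \<notin> {u, x0, x1, y0, y1, v}" using subset by blast+
    then show ?thesis using rainbow_colourable_plus_edge \<open>w1 \<noteq> w2\<close> by blast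
  qed (use assms in auto)
qed

end

lemma bounded_product_cases:
  fixes a b :: nat
  assumes "1 \<le> a" "1 \<le> b" "a * b + 2 \<le> 2 * a + b" "a * b + 2 \<le> a + 2 * b"
  shows "a = 1 \<or> b = 1 \<or> a = 2 \<and> b = 2"
proof (rule ccontr)
  assume "\<not> ?thesis"
  then obtain a' b' where "a = a' + 2" "b = b' + 2"
    using assms(1,2) by (metis add.commute le_Suc_ex Suc_1 le_antisym not_less_eq_eq One_nat_def)
  with assms(3,4) \<open>\<not> ?thesis\<close> show False
    by (simp add: algebra_simps)
qed

locale dense_graph = sgraph +
  assumes connected: "connected_graph V E"
    and three_le_card: "3 \<le> card V"
    and many_edges: "(card V - 2 choose 2) + 2 \<le> card E"
begin

lemma neighbours_nonempty:
  assumes "u \<in> V"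
  shows "neighbours V E u \<noteq> {}"
proof -
  have "\<not> V \<subseteq> {u}"
    using three_le_card card_mono[of "{u}" V] by auto
  then obtain w where "w \<in> V" "w \<noteq> u" by blast
  then obtain xs where xs: "is_path V E xs" "hd xs = u" "last xs = w"
    using connected assms by (auto simp: connected_graph_def)
  then obtain y ys where "xs = u # y # ys"
    using \<open>w \<noteq> u\<close> by (cases xs rule: remdups_adj.cases) (auto simp: is_path_def)
  then have "{u, y} \<in> E"
    using xs(1) by (simp add: is_path_Cons_Cons)
  then show ?thesis by auto
qed

lemma card_non_edges_le:
  assumes "u \<in> V" "v \<in> V" "u \<noteq> v"
    and N: "N \<subseteq> {e. e \<subseteq> V - {u, v} \<and> card e = 2}" and "N \<inter> E = {}"
  shows "card N + 2 \<le> card (neighbours V E u) + card (neighbours V E v)"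
proof -
  let ?P = "{e. e \<subseteq> V - {u, v} \<and> card e = 2}"
  let ?Eu = "(\<lambda>w. {u, w}) ` neighbours V E u" and ?Ev = "(\<lambda>w. {v, w}) ` neighbours V E v"
  have "card (V - {u, v}) = card V - 2"
    using assms finite_V by (simp add: card_Diff_subset)
  then have card_P: "card ?P = (card V - 2) choose 2"
    using n_subsets[of "V - {u, v}" 2] finite_V by simp
  have fin_P: "finite ?P"
    using finite_V by simp
  have "E \<subseteq> ?Eu \<union> ?Ev \<union> (?P - N)"
    using edges_cover[of u v] assms(5) by blast
  then have "card E \<le> card (?Eu \<union> ?Ev \<union> (?P - N))"
    using fin_P finite_neighbours by (intro card_mono) auto
  also have "\<dots> \<le> card ?Eu + card ?Ev + card (?P - N)"
    by (meson card_Un_le add_le_mono le_refl order_trans)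
  also have "\<dots> \<le> card (neighbours V E u) + card (neighbours V E v) + (card ?P - card N)"
    using card_image_le[OF finite_neighbours, of "\<lambda>w. {u, w}" u]
      card_image_le[OF finite_neighbours, of "\<lambda>w. {v, w}" v]
      card_Diff_subset[OF finite_subset[OF N fin_P] N]
    by linarith
  finally show ?thesis
    using many_edges card_P card_mono[OF fin_P N] by linarith
qed

end

locale separated_pair = dense_graph + coloured_sgraph +
  fixes u v :: 'a
  assumes separated: "rainbow_separated V E c u v"
begin

abbreviation "Nu \<equiv> neighbours V E u"
abbreviation "Nv \<equiv> neighbours V E v"

lemma u_in_V: "u \<in> V" and v_in_V: "v \<in> V" and u_ne_v: "u \<noteq> v"
  using separated by (simp_all add: rainbow_separated_def)

lemma no_rainbow_path: "rainbow_path V E c xs \<Longrightarrow> hd xs = u \<Longrightarrow> last xs = v \<Longrightarrow> False"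
  using separated by (auto simp: rainbow_separated_def)

lemma not_adjacent: "{u, v} \<notin> E"
  using no_rainbow_path[of "[u, v]"] rainbow_path_edge by auto

lemma no_common_neighbour: "{u, w} \<in> E \<Longrightarrow> {w, v} \<notin> E"
  using no_rainbow_path[of "[u, w, v]"] rainbow_path_two_edges[of u w v] u_ne_v by auto

lemma three_edge_colours:
  "{u, a} \<in> E \<Longrightarrow> {a, b} \<in> E \<Longrightarrow> {b, v} \<in> E \<Longrightarrow> distinct [u, a, b, v] \<Longrightarrow> c {u, a} = c {b, v}"
  using no_rainbow_path[of "[u, a, b, v]"] rainbow_path_three_edges[of u a b v] by auto

lemma four_edge_colours:
  "{u, a} \<in> E \<Longrightarrow> {a, b} \<in> E \<Longrightarrow> {b, d} \<in> E \<Longrightarrow> {d, v} \<in> E \<Longrightarrow> distinct [u, a, b, d, v] \<Longrightarrow>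
    c {u, a} = c {b, d} \<or> c {u, a} = c {d, v} \<or> c {a, b} = c {d, v}"
  using no_rainbow_path[of "[u, a, b, d, v]"] rainbow_path_four_edges[of u a b d v] by auto

lemma neighbours_u_subset: "Nu \<subseteq> V - {u, v}"
  and neighbours_v_subset: "Nv \<subseteq> V - {u, v}"
  and neighbours_disjoint: "Nu \<inter> Nv = {}"
  using not_adjacent no_common_neighbour edge_vertices by (fastforce simp: insert_commute)+

lemma link_colour:
  assumes "x \<in> Nu" "y \<in> Nv" "{x, y} \<in> E"
  shows "c {u, x} = c {y, v}"
proof -
  have "distinct [u, x, y, v]"
    using assms neighbours_u_subset neighbours_v_subset neighbours_disjoint u_ne_v by auto
  with assms show ?thesis
    using three_edge_colours[of x y] by (simp add: insert_commute)
qed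

text \<open>A path u x y v is not rainbow, so its end edges share a colour; properness at v (resp. u)
  then makes the edges between the two neighbourhoods a matching.\<close>
lemma link_unique_right:
  assumes "x \<in> Nu" "y \<in> Nv" "y' \<in> Nv" "{x, y} \<in> E" "{x, y'} \<in> E"
  shows "y = y'"
  using link_colour[of x y] link_colour[of x y'] colours_differ[of y v y'] assms
  by (auto simp: insert_commute)

lemma link_unique_left:
  assumes "x \<in> Nu" "x' \<in> Nu" "y \<in> Nv" "{x, y} \<in> E" "{x', y} \<in> E"
  shows "x = x'"
  using link_colour[of x y] link_colour[of x' y] colours_differ[of x u x'] assms
  by (auto simp: insert_commute)

definition links :: "('a \<times> 'a) set" where
  "links = {(x, y). x \<in> Nu \<and> y \<in> Nv \<and> {x, y} \<in> E}"

definition non_links :: "('a \<times> 'a) set" where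
  "non_links = {(x, y). x \<in> Nu \<and> y \<in> Nv \<and> {x, y} \<notin> E}"

lemma finite_non_links: "finite non_links"
  by (rule finite_subset[of _ "Nu \<times> Nv"]) (auto simp: non_links_def finite_neighbours)

lemma inj_on_fst_links: "inj_on fst links"
proof (rule inj_onI, clarify)
  fix x y x' y' assume "(x, y) \<in> links" "(x', y') \<in> links" "fst (x, y) = fst (x', y')"
  then show "x = x' \<and> y = y'"
    using link_unique_right[of x y y'] unfolding links_def by auto
qed

lemma inj_on_snd_links: "inj_on snd links"
proof (rule inj_onI, clarify)
  fix x y x' y' assume "(x, y) \<in> links" "(x', y') \<in> links" "snd (x, y) = snd (x', y')"
  then show "x = x' \<and> y = y'"
    using link_unique_left[of x x' y] unfolding links_def by auto
qed

lemma card_links_le: "card links \<le> card Nu" "card links \<le> card Nv"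
proof -
  have "fst ` links \<subseteq> Nu" "snd ` links \<subseteq> Nv"
    unfolding links_def by auto
  then show "card links \<le> card Nu" "card links \<le> card Nv"
    using card_inj_on_le[OF inj_on_fst_links _ finite_neighbours]
      card_inj_on_le[OF inj_on_snd_links _ finite_neighbours] by blast+
qed

lemma card_non_links_plus_links: "card non_links + card links = card Nu * card Nv"
proof -
  have "non_links \<union> links = Nu \<times> Nv" "non_links \<inter> links = {}"
    by (auto simp: links_def non_links_def)
  moreover have "finite (Nu \<times> Nv)"
    using finite_neighbours by simp
  ultimately show ?thesis
    by (metis card_Un_disjoint card_cartesian_product finite_Un)
qed

lemma non_links_as_pairs:
  shows "inj_on (\<lambda>(x, y). {x, y}) non_links"
    and "(\<lambda>(x, y). {x, y}) ` non_links \<subseteq> {e. e \<subseteq> V - {u, v} \<and> card e = 2}"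
    and "(\<lambda>(x, y). {x, y}) ` non_links \<inter> E = {}"
proof -
  show "inj_on (\<lambda>(x, y). {x, y}) non_links"
    using neighbours_disjoint by (auto intro!: inj_onI simp: non_links_def doubleton_eq_iff)
  have "x \<in> V - {u, v} \<and> y \<in> V - {u, v} \<and> x \<noteq> y" if "(x, y) \<in> non_links" for x y
    using that neighbours_u_subset neighbours_v_subset neighbours_disjoint
    unfolding non_links_def by blast
  then show "(\<lambda>(x, y). {x, y}) ` non_links \<subseteq> {e. e \<subseteq> V - {u, v} \<and> card e = 2}"
    by auto
  show "(\<lambda>(x, y). {x, y}) ` non_links \<inter> E = {}"
    by (auto simp: non_links_def)
qed

lemma card_non_links_le: "card non_links + 2 \<le> card Nu + card Nv"
  using card_non_edges_le[OF u_in_V v_in_V u_ne_v non_links_as_pairs(2,3)]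
    card_image[OF non_links_as_pairs(1)] by simp

lemma non_edge_is_non_link:
  assumes tight: "card Nu + card Nv \<le> card non_links + 2"
    and pq: "p \<in> V - {u, v}" "q \<in> V - {u, v}" "p \<noteq> q" "{p, q} \<notin> E"
  shows "\<exists>(x, y) \<in> non_links. {p, q} = {x, y}"
proof (rule ccontr)
  let ?N = "insert {p, q} ((\<lambda>(x, y). {x, y}) ` non_links)"
  assume "\<not> ?thesis"
  then have "{p, q} \<notin> (\<lambda>(x, y). {x, y}) ` non_links"
    by auto
  then have "card ?N = card non_links + 1"
    using finite_non_links card_image[OF non_links_as_pairs(1)] by simp
  moreover have "card ?N + 2 \<le> card Nu + card Nv"
    using non_links_as_pairs(2,3) pq
    by (intro card_non_edges_le[OF u_in_V v_in_V u_ne_v]) auto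
  ultimately show False
    using tight by simp
qed

lemma degree_cases: "card Nu = 1 \<or> card Nv = 1 \<or> card Nu = 2 \<and> card Nv = 2"
proof (rule bounded_product_cases)
  show "1 \<le> card Nu" "1 \<le> card Nv"
    using neighbours_nonempty[OF u_in_V] neighbours_nonempty[OF v_in_V] finite_neighbours
    by (simp_all add: Suc_le_eq card_gt_0_iff)
  show "card Nu * card Nv + 2 \<le> 2 * card Nu + card Nv"
    and "card Nu * card Nv + 2 \<le> card Nu + 2 * card Nv"
    using card_non_links_le card_non_links_plus_links card_links_le by linarith+
qed

lemma pendant_link:
  assumes "Nu = {x}"
  shows "\<exists>y0 \<in> Nv. {x, y0} \<in> E"
proof (rule ccontr)
  assume "\<not> (\<exists>y0 \<in> Nv. {x, y0} \<in> E)"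
  then have "non_links = {x} \<times> Nv"
    using assms unfolding non_links_def by auto
  then show False
    using card_non_links_le assms by (simp add: card_cartesian_product)
qed

lemma matching:
  assumes "card Nu = 2" "card Nv = 2"
  obtains x0 x1 y0 y1 where "Nu = {x0, x1}" "Nv = {y0, y1}" "x0 \<noteq> x1" "y0 \<noteq> y1"
    "{x0, y0} \<in> E" "{x1, y1} \<in> E"
proof -
  have "card links = 2"
    using card_non_links_le card_non_links_plus_links card_links_le assms by simp
  then have "card (fst ` links) = card Nu"
    using assms card_image[OF inj_on_fst_links] by simp
  moreover have "fst ` links \<subseteq> Nu"
    by (auto simp: links_def)
  ultimately have fst_links: "fst ` links = Nu"
    using card_subset_eq[OF finite_neighbours] by blast
  obtain x0 x1 where Nu: "Nu = {x0, x1}" and "x0 \<noteq> x1"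
    using assms(1) by (auto simp: card_2_iff)
  have "x0 \<in> fst ` links" "x1 \<in> fst ` links"
    using fst_links Nu by auto
  then obtain y0 y1 where "(x0, y0) \<in> links" "(x1, y1) \<in> links"
    by force
  then have links: "y0 \<in> Nv" "y1 \<in> Nv" "{x0, y0} \<in> E" "{x1, y1} \<in> E"
    by (auto simp: links_def)
  then have "y0 \<noteq> y1"
    using link_unique_left[of x0 x1 y0] Nu \<open>x0 \<noteq> x1\<close> by auto
  then have "Nv = {y0, y1}"
    using links assms(2) card_subset_eq[OF finite_neighbours, of "{y0, y1}" v] by simp
  show ?thesis
    by (rule that) fact+
qed

end

locale pendant_separated_pair = separated_pair +
  fixes x y0 :: 'a
  assumes neighbours_u: "neighbours V E u = {x}"
    and y0: "y0 \<in> neighbours V E v" and link: "{x, y0} \<in> E"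
begin

lemma non_links_eq: "non_links = {x} \<times> (Nv - {y0})"
proof -
  have "{x, y} \<notin> E" if "y \<in> Nv - {y0}" for y
    using link_unique_right[of x y0 y] y0 link that by (simp add: neighbours_u) blast
  then show ?thesis
    using link unfolding non_links_def neighbours_u by auto
qed

lemma core_edge_iff:
  assumes pq: "p \<in> V - {u, v}" "q \<in> V - {u, v}" "p \<noteq> q"
  shows "{p, q} \<in> E \<longleftrightarrow> (\<forall>y \<in> Nv - {y0}. {p, q} \<noteq> {x, y})"
proof
  assume e: "{p, q} \<in> E"
  show "\<forall>y \<in> Nv - {y0}. {p, q} \<noteq> {x, y}"
  proof (intro ballI notI)
    fix y assume "y \<in> Nv - {y0}" "{p, q} = {x, y}"
    then have "(x, y) \<in> non_links" by (simp add: non_links_eq)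
    with e \<open>{p, q} = {x, y}\<close> show False by (simp add: non_links_def)
  qed
next
  assume no_link: "\<forall>y \<in> Nv - {y0}. {p, q} \<noteq> {x, y}"
  have "card Nu + card Nv \<le> card non_links + 2"
    using y0 finite_neighbours
    by (simp add: non_links_eq neighbours_u card_cartesian_product card_Diff_singleton)
  then show "{p, q} \<in> E"
    using non_edge_is_non_link[OF _ pq] no_link by (auto simp: non_links_eq)
qed

lemma x_in_core: "x \<in> V - {u, v}" and y0_in_core: "y0 \<in> V - {u, v}" and x_ne_y0: "x \<noteq> y0"
proof -
  have "x \<in> Nu" by (simp add: neighbours_u)
  then show "x \<in> V - {u, v}" "y0 \<in> V - {u, v}" "x \<noteq> y0"
    using neighbours_u_subset neighbours_v_subset neighbours_disjoint y0 by blast+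
qed

lemma colour_at_v:
  assumes y: "y \<in> Nv - {y0}"
  shows "c {y, v} = c {x, y0}"
proof -
  have y_core: "y \<in> V - {u, v}" and "y \<noteq> x"
    using y neighbours_v_subset neighbours_disjoint neighbours_u by auto
  have y0_y: "{y0, y} \<in> E"
    using core_edge_iff[OF y0_in_core y_core] y x_ne_y0 by (auto simp: doubleton_eq_iff)
  have u_x: "{u, x} \<in> E" and y_v: "{y, v} \<in> E" and y0_v: "{y0, v} \<in> E"
    using neighbours_u y y0 by (auto simp: insert_commute)
  have "distinct [u, x, y0, y, v]"
    using x_in_core y0_in_core y_core x_ne_y0 \<open>y \<noteq> x\<close> y u_ne_v by auto
  then have "c {u, x} = c {y0, y} \<or> c {u, x} = c {y, v} \<or> c {x, y0} = c {y, v}"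
    by (rule four_edge_colours[OF u_x link y0_y y_v])
  moreover have "c {u, x} = c {y0, v}"
    using link_colour[of x y0] neighbours_u y0 link by simp
  moreover have "y \<noteq> v" "y \<noteq> y0"
    using y_core y by auto
  then have "c {v, y0} \<noteq> c {y0, y}" "c {y0, v} \<noteq> c {v, y}"
    using colours_differ[of v y0 y] colours_differ[of y0 v y] y0_y y0_v y_v
    by (simp_all add: insert_commute)
  ultimately show ?thesis
    by (metis insert_commute)
qed

lemma single_case:
  assumes "Nv = {y0}"
  shows "graph_iso V E P4_V P4_E \<or> rainbow_colourable_by_degree V E"
proof -
  interpret P4_configuration V E u x y0 v
  proof
    show "distinct [u, x, y0, v]" "{u, x, y0, v} \<subseteq> V"
      using x_in_core y0_in_core x_ne_y0 u_in_V v_in_V u_ne_v by auto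
    show "Nu = {x}" "Nv = {y0}"
      by (fact neighbours_u, fact assms)
    show "{p, q} \<in> E" if "p \<in> V - {u, v}" "q \<in> V - {u, v}" "p \<noteq> q" for p q
      using core_edge_iff[OF that] assms by simp
  qed
  show ?thesis by (rule P4_or_rainbow_colourable)
qed

lemma double_case:
  assumes Nv: "Nv = {y0, y1}" and "y1 \<noteq> y0"
  shows "graph_iso V E Z2_V Z2_E \<or> rainbow_colourable_by_degree V E"
proof -
  have y1_core: "y1 \<in> V - {u, v}" and "y1 \<noteq> x"
    using Nv neighbours_v_subset neighbours_disjoint neighbours_u by auto
  have core: "{p, q} \<in> E \<longleftrightarrow> {p, q} \<noteq> {x, y1}" if "p \<in> V - {u, v}" "q \<in> V - {u, v}" "p \<noteq> q" for p q
    using core_edge_iff[OF that] Nv \<open>y1 \<noteq> y0\<close> by auto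
  let ?C = "V - {u, x, y0, y1, v}"
  have edges: "{x, w} \<in> E" "{w, y1} \<in> E" if "w \<in> ?C" for w
    using core[of x w] core[of w y1] that x_in_core y1_core by (auto simp: doubleton_eq_iff)
  have u_x: "{u, x} \<in> E" and y1_v: "{y1, v} \<in> E" and y0_v: "{y0, v} \<in> E"
    using neighbours_u Nv by (auto simp: insert_commute)
  have "c {y1, w} = c {u, x}" if w: "w \<in> ?C" for w
  proof -
    have "distinct [u, x, w, y1, v]"
      using w x_in_core y1_core \<open>y1 \<noteq> x\<close> u_ne_v by auto
    then have "c {u, x} = c {w, y1} \<or> c {u, x} = c {y1, v} \<or> c {x, w} = c {y1, v}"
      by (rule four_edge_colours[OF u_x edges[OF w] y1_v])
    moreover have "c {u, x} = c {y0, v}"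
      using link_colour[of x y0] neighbours_u y0 link by simp
    moreover have "c {y0, v} \<noteq> c {v, y1}"
      using colours_differ[of y0 v y1] y0_v y1_v \<open>y1 \<noteq> y0\<close> by (simp add: insert_commute)
    moreover have "c {y1, v} = c {x, y0}"
      using colour_at_v[of y1] Nv \<open>y1 \<noteq> y0\<close> by simp
    moreover have "c {w, x} \<noteq> c {x, y0}"
      using colours_differ[of w x y0] edges[OF w] link w by (simp add: insert_commute)
    ultimately show ?thesis
      by (metis insert_commute)
  qed
  moreover have "?C \<subseteq> neighbours V E y1"
  proof
    fix w assume "w \<in> ?C"
    then have "{w, y1} \<in> E" by (rule edges)
    then show "w \<in> neighbours V E y1" by (simp add: insert_commute)
  qed
  ultimately have "card ?C \<le> 1"
    by (intro card_le_1_if_same_colour[of ?C y1]) auto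
  interpret Z2_configuration V E u x y0 y1 v
  proof
    show "distinct [u, x, y0, y1, v]" "{u, x, y0, y1, v} \<subseteq> V"
      using x_in_core y0_in_core y1_core x_ne_y0 \<open>y1 \<noteq> x\<close> \<open>y1 \<noteq> y0\<close> u_in_V v_in_V u_ne_v by auto
  qed (use neighbours_u Nv core in auto)
  show ?thesis
    using Z2_or_rainbow_colourable \<open>card ?C \<le> 1\<close> by blast
qed

lemma pendant_cases:
  "graph_iso V E P4_V P4_E \<or> graph_iso V E Z2_V Z2_E \<or> rainbow_colourable_by_degree V E"
proof -
  have le_1: "card (Nv - {y0}) \<le> 1"
    using colour_at_v by (intro card_le_1_if_same_colour[of _ v]) (auto simp: insert_commute)
  have "finite (Nv - {y0})"
    using finite_neighbours by simp
  then show ?thesis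
  proof (rule card_le_2_cases)
    assume "Nv - {y0} = {}"
    then have "Nv = {y0}" using y0 by blast
    then show ?thesis using single_case by blast
  next
    fix y1 assume "Nv - {y0} = {y1}"
    then have "Nv = {y0, y1}" "y1 \<noteq> y0" using y0 by blast+
    then show ?thesis using double_case by blast
  qed (use le_1 in auto)
qed

end

locale matched_separated_pair = separated_pair +
  fixes x0 x1 y0 y1 :: 'a
  assumes neighbours_u: "neighbours V E u = {x0, x1}" and neighbours_v: "neighbours V E v = {y0, y1}"
    and x0_ne_x1: "x0 \<noteq> x1" and y0_ne_y1: "y0 \<noteq> y1"
    and link0: "{x0, y0} \<in> E" and link1: "{x1, y1} \<in> E"
begin

lemma in_neighbourhoods: "x0 \<in> Nu" "x1 \<in> Nu" "y0 \<in> Nv" "y1 \<in> Nv"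
  by (simp_all add: neighbours_u neighbours_v)

lemma no_cross_links: "{x0, y1} \<notin> E" "{x1, y0} \<notin> E"
  using link_unique_right[OF in_neighbourhoods(1,3,4) link0] link_unique_right[OF in_neighbourhoods(2,4,3) link1]
    y0_ne_y1 by blast+

lemma core_edge_iff:
  assumes pq: "p \<in> V - {u, v}" "q \<in> V - {u, v}" "p \<noteq> q"
  shows "{p, q} \<in> E \<longleftrightarrow> {p, q} \<noteq> {x0, y1} \<and> {p, q} \<noteq> {x1, y0}"
proof -
  have non_links: "non_links = {(x0, y1), (x1, y0)}"
    using link0 link1 no_cross_links unfolding non_links_def neighbours_u neighbours_v by auto
  have "x0 \<noteq> y1" "x1 \<noteq> y0"
    using neighbours_disjoint in_neighbourhoods by blast+
  then have "card Nu + card Nv \<le> card non_links + 2"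
    using x0_ne_x1 y0_ne_y1 by (simp add: non_links neighbours_u neighbours_v)
  then show ?thesis
    using non_edge_is_non_link[OF _ pq] no_cross_links by (auto simp: non_links)
qed

lemma card_rest_le_2: "card (V - {u, x0, x1, y0, y1, v}) \<le> 2"
proof -
  let ?C = "V - {u, x0, x1, y0, y1, v}"
  have core: "x0 \<in> V - {u, v}" "y1 \<in> V - {u, v}" "x0 \<noteq> y1"
    using in_neighbourhoods neighbours_u_subset neighbours_v_subset neighbours_disjoint by blast+
  have edges: "{x0, w} \<in> E" "{w, y1} \<in> E" if w: "w \<in> ?C" for w
  proof -
    have "w \<in> V - {u, v}" "x0 \<noteq> w" "w \<noteq> y1" "x1 \<noteq> w" "w \<noteq> x0" "y0 \<noteq> w" "w \<noteq> x1"
      using w by auto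
    then show "{x0, w} \<in> E" "{w, y1} \<in> E"
      using core_edge_iff[of x0 w] core_edge_iff[of w y1] core by (auto simp: doubleton_eq_iff)
  qed
  have u_x0: "{u, x0} \<in> E" and u_x1: "{u, x1} \<in> E" and y1_v: "{y1, v} \<in> E"
    using in_neighbourhoods by (simp_all add: insert_commute)
  have colour_cases: "c {y1, w} = c {u, x0} \<or> c {x0, w} = c {u, x1}" if w: "w \<in> ?C" for w
  proof -
    have "distinct [u, x0, w, y1, v]"
      using w core u_ne_v by auto
    then have "c {u, x0} = c {w, y1} \<or> c {u, x0} = c {y1, v} \<or> c {x0, w} = c {y1, v}"
      by (rule four_edge_colours[OF u_x0 edges[OF w] y1_v])
    moreover have "c {y1, v} = c {u, x1}"
      using link_colour[OF in_neighbourhoods(2,4) link1] by simp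
    moreover have "c {x0, u} \<noteq> c {u, x1}"
      using colours_differ[of x0 u x1] u_x0 u_x1 x0_ne_x1 by (simp add: insert_commute)
    ultimately show ?thesis
      by (metis insert_commute)
  qed
  define C1 where "C1 = {w \<in> ?C. c {y1, w} = c {u, x0}}"
  define C2 where "C2 = {w \<in> ?C. c {x0, w} = c {u, x1}}"
  have "?C \<subseteq> C1 \<union> C2"
    using colour_cases by (auto simp: C1_def C2_def)
  then have "card ?C \<le> card (C1 \<union> C2)"
    using finite_V by (intro card_mono) (auto simp: C1_def C2_def)
  also have "\<dots> \<le> card C1 + card C2"
    by (rule card_Un_le)
  also have "card C1 \<le> 1"
  proof (rule card_le_1_if_same_colour)
    show "C1 \<subseteq> neighbours V E y1"
      using edges by (auto simp: C1_def insert_commute)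
  qed (simp add: C1_def)
  also have "card C2 \<le> 1"
  proof (rule card_le_1_if_same_colour)
    show "C2 \<subseteq> neighbours V E x0"
      using edges by (auto simp: C2_def)
  qed (simp add: C2_def)
  finally show ?thesis by simp
qed

lemma matched_cases: "graph_iso V E G63_V G63_E \<or> rainbow_colourable_by_degree V E"
proof -
  interpret G63_configuration V E u x0 x1 y0 y1 v
  proof
    have "{x0, x1, y0, y1} \<subseteq> V - {u, v}" "{x0, x1} \<inter> {y0, y1} = {}"
      using neighbours_u neighbours_v neighbours_u_subset neighbours_v_subset neighbours_disjoint by auto
    then show "distinct [u, x0, x1, y0, y1, v]" "{u, x0, x1, y0, y1, v} \<subseteq> V"
      using x0_ne_x1 y0_ne_y1 u_in_V v_in_V u_ne_v by auto
  qed (use neighbours_u neighbours_v core_edge_iff in auto)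
  show ?thesis
    using G63_or_rainbow_colourable card_rest_le_2 by blast
qed

end

context separated_pair
begin

lemma rainbow_colourable_or_exceptional:
  "rainbow_colourable_by_degree V E \<or> graph_iso V E P4_V P4_E \<or> graph_iso V E Z2_V Z2_E \<or>
    graph_iso V E G63_V G63_E"
proof -
  have pendant: "graph_iso V E P4_V P4_E \<or> graph_iso V E Z2_V Z2_E \<or> rainbow_colourable_by_degree V E"
    if sep: "separated_pair V E c a b" and "card (neighbours V E a) = 1" for a b
  proof -
    interpret ab: separated_pair V E c a b by (fact sep)
    obtain x where "neighbours V E a = {x}"
      using \<open>card (neighbours V E a) = 1\<close> by (rule card_1_singletonE)
    moreover obtain y0 where "y0 \<in> neighbours V E b" "{x, y0} \<in> E"
      using ab.pendant_link[OF calculation] by blast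
    ultimately interpret pendant_separated_pair V E c a b x y0
      by (intro pendant_separated_pair.intro[OF sep] pendant_separated_pair_axioms.intro)
    show ?thesis by (rule pendant_cases)
  qed
  have swapped: "separated_pair V E c v u"
    by unfold_locales (rule rainbow_separated_sym[OF separated])
  consider "card Nu = 1" | "card Nv = 1" | "card Nu = 2" "card Nv = 2"
    using degree_cases by blast
  then show ?thesis
  proof cases
    case 3
    then obtain x0 x1 y0 y1 where "Nu = {x0, x1}" "Nv = {y0, y1}" "x0 \<noteq> x1" "y0 \<noteq> y1"
      "{x0, y0} \<in> E" "{x1, y1} \<in> E"
      by (rule matching)
    then interpret matched_separated_pair V E c u v x0 x1 y0 y1
      by (intro matched_separated_pair.intro[OF separated_pair_axioms] matched_separated_pair_axioms.intro)
    show ?thesis using matched_cases by blast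
  qed (use pendant[OF separated_pair_axioms] pendant[OF swapped] in blast)+
qed

end

theorem theorem6p3:
  fixes V :: "'a set" and E :: "'a set set"
  assumes "connected_graph V E"
    and "card V \<ge> 3"
    and "card E \<ge> ((card V - 2) choose 2) + 2"
  shows "prc V E = chromatic_index E \<or> graph_iso V E P4_V P4_E \<or>
         graph_iso V E Z2_V Z2_E \<or> graph_iso V E G63_V G63_E"
proof -
  interpret dense_graph V E
    using assms by unfold_locales (auto simp: connected_graph_def)
  obtain c where c: "proper_edge_colouring E c" "c ` E \<subseteq> {..<chromatic_index E}"
    using chromatic_index_colouring[OF finite_E] .
  show ?thesis
  proof (cases "rainbow_connected V E c")
    case True
    with c have "proper_rainbow_colouring V E c (chromatic_index E)"
      by (simp add: proper_rainbow_colouring_def)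
    then show ?thesis
      using prc_eq_chromatic_indexI by blast
  next
    case False
    then obtain u v where "rainbow_separated V E c u v"
      by (auto simp: rainbow_connected_iff_not_separated)
    with c(1) interpret separated_pair V E c u v
      by unfold_locales
    show ?thesis
      using rainbow_colourable_or_exceptional
        prc_eq_chromatic_index_if_rainbow_colourable_by_degree[OF finite_E] by blast
  qed
qed

end
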